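(* Let $\mathcal M$ satisfy Assumption (A), and let $h:\mathcal X\times\mathcal S\to\mathbb R$ be measurable. 1. $h$ is counterfactually fair if and only if for every $s,s'\in\mathcal S$ and $\pi^*_{\langle s'|s\rangle}$-almost every $(x,x')$, $h(x,s)=h(x',s')$. 2. If (RE) holds, $h$ is counterfactually fair if and only if for every $s,s'\in\mathcal S$ with $s<s'$ and $\pi^*_{\langle s'|s\rangle}$-almost every $(x,x')$, $h(x,s)=h(x',s')$. 3. If (I) holds, $h$ is counterfactually fair if and only if for every $s,s'\in\mathcal S$ and $\mu_s$-almost every $x$, $h(x,s)=h(T^*_{\langle s'|s\rangle}(x),s')$. 4. If (I) and (RE) hold, $h$ is counterfactually fair if and only if for every $s,s'\in\mathcal S$ with $s<s'$ and $\mu_s$-almost every $x$, $h(x,s)=h(T^*_{\langle s'|s\rangle}(x),s')$.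
   Context: Let $(\Omega,\mathcal A,\mathbb P)$ be a probability space. A structural causal model (SCM) $\mathcal M=\langle U,G\rangle$ consists of two disjoint finite index sets $\mathcal I$ (endogenous) and $\mathcal J$ (exogenous), measurable product spaces $\mathcal V=\prod_{i\in\mathcal I}\mathcal V_i\subseteq\mathbb R^{|\mathcal I|}$ and $\mathcal U=\prod_{j\in\mathcal J}\mathcal U_j\subseteq\mathbb R^{|\mathcal J|}$, a random vector $U:\Omega\to\mathcal U$ (its components need not be independent), and for each $i\in\mathcal I$ subsets $\mathrm{Endo}(i)\subseteq\mathcal I$, $\mathrm{Exo}(i)\subseteq\mathcal J$ (endogenous and exogenous parents) and a measurable map $G_i:\mathcal V_{\mathrm{Endo}(i)}\times\mathcal U_{\mathrm{Exo}(i)}\to\mathcal V_i$. A random vector $V:\Omega\to\mathcal V$ is a solution of $\mathcal M$ if $V_i=G_i(V_{\mathrm{Endo}(i)},U_{\mathrm{Exo}(i)})$ $\mathbb P$-a.s. for every $i\in\mathcal I$. The graph of $\mathcal M$ has nodes $\mathcal I\cup\mathcal J$ and an edge $k\to l$ iff $l\in\mathcal I$ and $k\in\mathrm{Endo}(l)\cup\mathrm{Exo}(l)$. Assumption (A): the graph of $\mathcal M$ is acyclic; then $\mathcal M$ has a solution, unique up to $\mathbb P$-null sets. For $I\subseteq\mathcal I$ and $v_I\in\mathcal V_I$, the do-intervention $\mathrm{do}(V_I=v_I)$ produces the model $\langle U,\tilde G\rangle$ with $\tilde G_i\equiv v_i$ for $i\in I$ and $\tilde G_i=G_i$ otherwise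 (same $U$); it is again acyclic, and its solution is denoted $V_{V_I=v_I}$. Standing setting: the solution is $V=(X,S)$ where $X:\Omega\to\mathcal X\subseteq\mathbb R^d$ and $S:\Omega\to\mathcal S$ with $\mathcal S\subset\mathbb R$ finite and $\mathbb P(S=s)>0$ for all $s\in\mathcal S$. $U_X$ denotes the vector of exogenous parents of the components of $X$, and $U_S$ that of $S$. For $s\in\mathcal S$, $X_{S=s}$ denotes the $X$-component of the solution of the model intervened by $\mathrm{do}(S=s)$. Notation: $\mu_s:=\mathcal L(X\mid S=s)$ with support $\mathcal X_s$; $\mu_{\langle s'|s\rangle}(\cdot\mid x):=\mathcal L(X_{S=s'}\mid X=x,S=s)$. The structural counterfactual coupling is $\pi^*_{\langle s'|s\rangle}:=\mathcal L\big((X,X_{S=s'})\mid S=s\big)$. Under (A) there is a measurable $F$ with $X=F(S,U_X)$ a.s. and $X_{S=s}=F(s,U_X)$ a.s. for every $s$; set $f_s(u):=F(s,u)$. Assumption (I): the functions $\{f_s\}_{s\in\mathcal S}$ are injective; under (I), $T^*_{\langle s'|s\rangle}:=f_{s'}\circ f_s^{-1}|_{\mathcal X_s}$. Assumption (RE): $U_S$ is independent of $U_X$, and no component of $X$ is an endogenous parent of $S$. Counterfactual fairness: a predictor $\hat Y=h(X,S)$ is counterfactually fair if for every $s,s'\in\mathcal S$ and $\mu_s$-almost every $x\in\mathcal X_s$, $\mathcal L(\hat Y_{S=s}\mid X=x,S=s)=\mathcal L(\hat Y_{S=s'}\mid X=x,S=s)$, where $\hat Y_{S=s}:=h(X_{S=s},s)$.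 *)

theory Defs
  imports "HOL-Probability.Probability"
begin

text \<open>Endogenous nodes: type 'i (finite); exogenous nodes: type 'j (finite).
  Endogenous values are real vectors, U is a random vector of exogenous values,
  component j living in the Borel set Usp j.  The structural map of node i is
  G i :: (endogenous vector) => (exogenous vector) => real, required to depend
  only on the coordinates in Endo i and Exo i (so it is a map on
  V_Endo(i) x U_Exo(i)).\<close>

definition depends_on_parents ::
  "('i \<Rightarrow> 'i set) \<Rightarrow> ('i \<Rightarrow> 'j set) \<Rightarrow> ('i \<Rightarrow> ('i \<Rightarrow> real) \<Rightarrow> ('j \<Rightarrow> real) \<Rightarrow> real) \<Rightarrow> bool" where
  "depends_on_parents Endo Exo G \<longleftrightarrow>
     (\<forall>i v v' u u'. (\<forall>k\<in>Endo i. v k = v' k) \<longrightarrow> (\<forall>j\<in>Exo i. u j = u' j) \<longrightarrow> G i v u = G i v' u')"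

definition is_SCM ::
  "'w measure \<Rightarrow> ('j::finite \<Rightarrow> real set) \<Rightarrow> ('w \<Rightarrow> 'j \<Rightarrow> real) \<Rightarrow> ('i::finite \<Rightarrow> 'i set) \<Rightarrow> ('i \<Rightarrow> 'j set)
    \<Rightarrow> ('i \<Rightarrow> ('i \<Rightarrow> real) \<Rightarrow> ('j \<Rightarrow> real) \<Rightarrow> real) \<Rightarrow> bool" where
  "is_SCM P Usp U Endo Exo G \<longleftrightarrow>
     prob_space P \<and>
     (\<forall>j. Usp j \<in> sets borel) \<and>
     U \<in> measurable P (PiM UNIV (\<lambda>_. borel)) \<and>
     (\<forall>\<omega>\<in>space P. \<forall>j. U \<omega> j \<in> Usp j) \<and>
     (\<forall>i. (\<lambda>(v, u). G i v u) \<in> borel_measurable (PiM UNIV (\<lambda>_. borel) \<Otimes>\<^sub>M PiM UNIV (\<lambda>_. borel))) \<and>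
     depends_on_parents Endo Exo G"

definition scm_graph :: "('i \<Rightarrow> 'i set) \<Rightarrow> ('i \<Rightarrow> 'j set) \<Rightarrow> ('i + 'j) rel" where
  "scm_graph Endo Exo =
     {(Inl k, Inl l) | k l. k \<in> Endo l} \<union> {(Inr j, Inl l) | j l. j \<in> Exo l}"

definition assumption_A :: "('i \<Rightarrow> 'i set) \<Rightarrow> ('i \<Rightarrow> 'j set) \<Rightarrow> bool" where
  "assumption_A Endo Exo \<longleftrightarrow> acyclic (scm_graph Endo Exo)"

definition is_solution ::
  "'w measure \<Rightarrow> ('w \<Rightarrow> 'j \<Rightarrow> real) \<Rightarrow> ('i \<Rightarrow> ('i \<Rightarrow> real) \<Rightarrow> ('j \<Rightarrow> real) \<Rightarrow> real)
     \<Rightarrow> ('w \<Rightarrow> 'i \<Rightarrow> real) \<Rightarrow> bool" where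
  "is_solution P U G V \<longleftrightarrow>
     V \<in> measurable P (PiM UNIV (\<lambda>_. borel)) \<and>
     (\<forall>i. AE \<omega> in P. V \<omega> i = G i (V \<omega>) (U \<omega>))"

definition do_intervention ::
  "('i \<Rightarrow> ('i \<Rightarrow> real) \<Rightarrow> ('j \<Rightarrow> real) \<Rightarrow> real) \<Rightarrow> 'i set \<Rightarrow> ('i \<Rightarrow> real)
     \<Rightarrow> ('i \<Rightarrow> ('i \<Rightarrow> real) \<Rightarrow> ('j \<Rightarrow> real) \<Rightarrow> real)" where
  "do_intervention G I v = (\<lambda>i vv uu. if i \<in> I then v i else G i vv uu)"

section \<open>Standing setting: endogenous nodes 'n option, None = S, Some i = X_i\<close>

definition MX :: "('n \<Rightarrow> real) measure" where
  "MX = PiM UNIV (\<lambda>_. borel)"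

definition Xof :: "('w \<Rightarrow> 'n option \<Rightarrow> real) \<Rightarrow> 'w \<Rightarrow> 'n \<Rightarrow> real" where
  "Xof V \<omega> = (\<lambda>i. V \<omega> (Some i))"

definition Sof :: "('w \<Rightarrow> 'n option \<Rightarrow> real) \<Rightarrow> 'w \<Rightarrow> real" where
  "Sof V \<omega> = V \<omega> None"

definition do_S ::
  "('n option \<Rightarrow> ('n option \<Rightarrow> real) \<Rightarrow> ('j \<Rightarrow> real) \<Rightarrow> real) \<Rightarrow> real
     \<Rightarrow> ('n option \<Rightarrow> ('n option \<Rightarrow> real) \<Rightarrow> ('j \<Rightarrow> real) \<Rightarrow> real)" where
  "do_S G s = do_intervention G {None} (\<lambda>_. s)"

definition cond_S :: "'w measure \<Rightarrow> ('w \<Rightarrow> 'n option \<Rightarrow> real) \<Rightarrow> real \<Rightarrow> 'w measure" where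
  "cond_S P V s = uniform_measure P {\<omega> \<in> space P. Sof V \<omega> = s}"

definition mu :: "'w measure \<Rightarrow> ('w \<Rightarrow> 'n option \<Rightarrow> real) \<Rightarrow> real \<Rightarrow> ('n \<Rightarrow> real) measure" where
  "mu P V s = distr (cond_S P V s) MX (Xof V)"

text \<open>Structural counterfactual coupling pi*_<s'|s> = L((X, X_{S=s'}) | S = s);
  Vdo s' is the solution of the model intervened by do(S = s').\<close>
definition pi_star ::
  "'w measure \<Rightarrow> ('w \<Rightarrow> 'n option \<Rightarrow> real) \<Rightarrow> (real \<Rightarrow> 'w \<Rightarrow> 'n option \<Rightarrow> real) \<Rightarrow> real \<Rightarrow> real
     \<Rightarrow> (('n \<Rightarrow> real) \<times> ('n \<Rightarrow> real)) measure" where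
  "pi_star P V Vdo s s' = distr (cond_S P V s) (MX \<Otimes>\<^sub>M MX) (\<lambda>\<omega>. (Xof V \<omega>, Xof (Vdo s') \<omega>))"

definition cond_law_version ::
  "'w measure \<Rightarrow> ('w \<Rightarrow> 'x) \<Rightarrow> 'x measure \<Rightarrow> ('w \<Rightarrow> real) \<Rightarrow> ('x \<Rightarrow> real measure) \<Rightarrow> bool" where
  "cond_law_version Q Z MZ Y K \<longleftrightarrow>
     K \<in> measurable MZ (prob_algebra borel) \<and>
     (\<forall>A\<in>sets borel. \<forall>B\<in>sets MZ.
        emeasure Q {\<omega> \<in> space Q. Y \<omega> \<in> A \<and> Z \<omega> \<in> B}
          = (\<integral>\<^sup>+ z. indicator B z * emeasure (K z) A \<partial>(distr Q MZ Z)))"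

text \<open>Counterfactual fairness of hat Y = h(X,S): for all s, s' in the state space Ss
  and mu_s-a.e. x, L(hat Y_{S=s} | X = x, S = s) = L(hat Y_{S=s'} | X = x, S = s),
  where hat Y_{S=s} = h(X_{S=s}, s).  Conditional laws are expressed through
  (a.e. unique) versions of the regular conditional distribution given X under P(.|S=s).\<close>
definition cf_fair ::
  "'w measure \<Rightarrow> ('w \<Rightarrow> 'n option \<Rightarrow> real) \<Rightarrow> (real \<Rightarrow> 'w \<Rightarrow> 'n option \<Rightarrow> real) \<Rightarrow> real set
     \<Rightarrow> (('n \<Rightarrow> real) \<Rightarrow> real \<Rightarrow> real) \<Rightarrow> bool" where
  "cf_fair P V Vdo Ss h \<longleftrightarrow>
     (\<forall>s\<in>Ss. \<forall>s'\<in>Ss. \<exists>K K'.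
        cond_law_version (cond_S P V s) (Xof V) MX (\<lambda>\<omega>. h (Xof (Vdo s) \<omega>) s) K \<and>
        cond_law_version (cond_S P V s) (Xof V) MX (\<lambda>\<omega>. h (Xof (Vdo s') \<omega>) s') K' \<and>
        (AE x in mu P V s. K x = K' x))"

definition JX :: "('n option \<Rightarrow> 'j set) \<Rightarrow> 'j set" where
  "JX Exo = (\<Union>i. Exo (Some i))"

definition UX :: "('n option \<Rightarrow> 'j set) \<Rightarrow> ('w \<Rightarrow> 'j \<Rightarrow> real) \<Rightarrow> 'w \<Rightarrow> 'j \<Rightarrow> real" where
  "UX Exo U \<omega> = restrict (U \<omega>) (JX Exo)"

definition US :: "('n option \<Rightarrow> 'j set) \<Rightarrow> ('w \<Rightarrow> 'j \<Rightarrow> real) \<Rightarrow> 'w \<Rightarrow> 'j \<Rightarrow> real" where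
  "US Exo U \<omega> = restrict (U \<omega>) (Exo None)"

definition assumption_RE ::
  "'w measure \<Rightarrow> ('w \<Rightarrow> 'j \<Rightarrow> real) \<Rightarrow> ('n option \<Rightarrow> 'n option set) \<Rightarrow> ('n option \<Rightarrow> 'j set) \<Rightarrow> bool" where
  "assumption_RE P U Endo Exo \<longleftrightarrow>
     prob_space.indep_var P
        (PiM (Exo None) (\<lambda>_. borel)) (US Exo U)
        (PiM (JX Exo) (\<lambda>_. borel)) (UX Exo U) \<and>
     (\<forall>i. Some i \<notin> Endo None)"

text \<open>F is a measurable map with X = F(S, U_X) a.s. and X_{S=s} = F(s, U_X) a.s.
  for every s in Ss (the representation guaranteed under (A)).\<close>
definition F_rep ::
  "'w measure \<Rightarrow> ('w \<Rightarrow> 'j \<Rightarrow> real) \<Rightarrow> ('n option \<Rightarrow> 'j set) \<Rightarrow> ('w \<Rightarrow> 'n option \<Rightarrow> real)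
     \<Rightarrow> (real \<Rightarrow> 'w \<Rightarrow> 'n option \<Rightarrow> real) \<Rightarrow> real set \<Rightarrow> (real \<Rightarrow> ('j \<Rightarrow> real) \<Rightarrow> 'n \<Rightarrow> real) \<Rightarrow> bool" where
  "F_rep P U Exo V Vdo Ss F \<longleftrightarrow>
     (\<lambda>(s, u). F s u) \<in> measurable (borel \<Otimes>\<^sub>M PiM (JX Exo) (\<lambda>_. borel)) MX \<and>
     (AE \<omega> in P. Xof V \<omega> = F (Sof V \<omega>) (UX Exo U \<omega>)) \<and>
     (\<forall>s\<in>Ss. AE \<omega> in P. Xof (Vdo s) \<omega> = F s (UX Exo U \<omega>))"

definition assumption_I ::
  "('j \<Rightarrow> real set) \<Rightarrow> ('n option \<Rightarrow> 'j set) \<Rightarrow> real set \<Rightarrow> (real \<Rightarrow> ('j \<Rightarrow> real) \<Rightarrow> 'n \<Rightarrow> real) \<Rightarrow> bool" where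
  "assumption_I Usp Exo Ss F \<longleftrightarrow> (\<forall>s\<in>Ss. inj_on (F s) (PiE (JX Exo) Usp))"

definition T_star ::
  "('j \<Rightarrow> real set) \<Rightarrow> ('n option \<Rightarrow> 'j set) \<Rightarrow> (real \<Rightarrow> ('j \<Rightarrow> real) \<Rightarrow> 'n \<Rightarrow> real)
     \<Rightarrow> real \<Rightarrow> real \<Rightarrow> ('n \<Rightarrow> real) \<Rightarrow> 'n \<Rightarrow> real" where
  "T_star Usp Exo F s s' x = F s' (the_inv_into (PiE (JX Exo) Usp) (F s) x)"

end

theory Submission
  imports Defs
begin

text \<open>
  By acyclicity, on the event \<open>S = s\<close> the factual solution also solves the model intervened by
  \<open>do(S = s)\<close>, so \<open>X\<^sub>S\<^sub>=\<^sub>s = X\<close> there. Hence \<open>h(X\<^sub>S\<^sub>=\<^sub>s, s) = h(X, s)\<close> is a function of \<open>X\<close> given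
  \<open>S = s\<close>; its conditional law is the Dirac kernel at \<open>h(x, s)\<close>, and the other conditional law
  equals it iff \<open>h(X\<^sub>S\<^sub>=\<^sub>s\<^sub>', s') = h(X, s)\<close> almost surely given \<open>S = s\<close>. This is (1), read through the
  coupling \<open>\<pi>*\<close>. Under (RE) the event where \<open>h(X\<^sub>S\<^sub>=\<^sub>s, s) \<noteq> h(X\<^sub>S\<^sub>=\<^sub>s\<^sub>', s')\<close> is a function of
  \<open>U\<^sub>X\<close>, hence independent of \<open>S\<close>; as \<open>P(S = s) > 0\<close>, it is null given \<open>S = s\<close> iff it is null,
  a condition symmetric in \<open>s, s'\<close>, which gives (2) and (4). Under (I), \<open>X = f\<^sub>s(U\<^sub>X)\<close> and
  \<open>X\<^sub>S\<^sub>=\<^sub>s\<^sub>' = T*(X)\<close> given \<open>S = s\<close>, which gives (3); the only subtlety is that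
  \<open>{x. h(x, s) = h(T* x, s')}\<close> need not be Borel, and Lusin's theorem supplies a \<open>\<sigma>\<close>-compact
  subset of full \<open>\<mu>\<^sub>s\<close>-measure.
\<close>

section \<open>Inner regularity and Lusin's theorem\<close>

lemma compact_inner_approx:
  fixes M :: "'a::polish_space measure"
  assumes sets_M: "sets M = sets borel" and "finite_measure M"
    and B: "B \<in> sets borel" and e: "e > 0"
  shows "\<exists>K. K \<subseteq> B \<and> compact K \<and> measure M (B - K) < e"
proof -
  interpret finite_measure M by fact
  have B_M: "B \<in> sets M" using B sets_M by simp
  have finite: "emeasure M (space M) \<noteq> \<infinity>" by simp
  show ?thesis
  proof (cases "measure M B < e")
    case True
    then show ?thesis by (intro exI[of _ "{}"]) auto
  next
    case False
    have "ennreal (measure M B - e) < emeasure M B"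
      using False e B_M by (simp add: emeasure_eq_measure ennreal_lessI)
    then obtain K where K: "K \<subseteq> B" "compact K" "ennreal (measure M B - e) < emeasure M K"
      unfolding inner_regular[OF sets_M finite B] less_SUP_iff by blast
    have K_M: "K \<in> sets M" using K(2) sets_M by (simp add: borel_compact)
    have "measure M B - e < measure M K"
      using K(3) False e by (simp add: emeasure_eq_measure ennreal_less_iff)
    moreover have "measure M (B - K) = measure M B - measure M K"
      using K(1) K_M B_M by (simp add: finite_measure_Diff)
    ultimately show ?thesis using K by (intro exI[of _ K]) auto
  qed
qed

lemma compact_inner_approx_both_sides:
  fixes M :: "'a::polish_space measure"
  assumes sets_M: "sets M = sets borel" and fin: "finite_measure M"
    and B: "B \<in> sets borel" and e: "e > 0"
  shows "\<exists>C C'. C \<subseteq> B \<and> C' \<subseteq> - B \<and> compact C \<and> compact C' \<and> measure M (- (C \<union> C')) < e"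
proof -
  interpret finite_measure M by fact
  obtain C where C: "C \<subseteq> B" "compact C" "measure M (B - C) < e / 2"
    using compact_inner_approx[OF sets_M fin B, of "e / 2"] e by auto
  obtain C' where C': "C' \<subseteq> - B" "compact C'" "measure M (- B - C') < e / 2"
    using compact_inner_approx[OF sets_M fin borel_comp[OF B], of "e / 2"] e by auto
  have "- (C \<union> C') = (B - C) \<union> (- B - C')" using C(1) C'(1) by blast
  moreover have "B - C \<in> sets M" "- B - C' \<in> sets M"
    using B C(2) C'(2) sets_M by (simp_all add: borel_comp sets.Diff borel_compact)
  ultimately have "measure M (- (C \<union> C')) \<le> measure M (B - C) + measure M (- B - C')"
    by (simp add: measure_Un_le)
  then show ?thesis using C C' by (intro exI[of _ C] exI[of _ C']) auto
qed

lemma continuous_on_if_basis_preimages_open: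
  fixes f :: "'a::topological_space \<Rightarrow> 'b::topological_space"
  assumes basis: "topological_basis \<B>"
    and preimage: "\<And>b. b \<in> \<B> \<Longrightarrow> \<exists>U. open U \<and> U \<inter> K = f -` b \<inter> K"
  shows "continuous_on K f"
  unfolding continuous_on_open_invariant
proof (intro allI impI)
  fix W :: "'b set"
  assume "open W"
  then obtain \<B>' where \<B>': "\<B>' \<subseteq> \<B>" "\<Union>\<B>' = W" using basis by (metis topological_basis_def)
  have "\<forall>b\<in>\<B>'. \<exists>U. open U \<and> U \<inter> K = f -` b \<inter> K" using preimage \<B>'(1) by blast
  then obtain U where U: "\<And>b. b \<in> \<B>' \<Longrightarrow> open (U b) \<and> U b \<inter> K = f -` b \<inter> K"
    by metis
  have "open (\<Union>b\<in>\<B>'. U b)" using U by auto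
  moreover have "(\<Union>b\<in>\<B>'. U b) \<inter> K = f -` W \<inter> K" using U \<B>'(2) by blast
  ultimately show "\<exists>A. open A \<and> A \<inter> K = f -` W \<inter> K" by blast
qed

lemma lusin:
  fixes M :: "'a::polish_space measure" and f :: "'a \<Rightarrow> 'b::second_countable_topology"
  assumes sets_M: "sets M = sets borel" and fin: "finite_measure M"
    and f: "f \<in> borel_measurable borel" and e: "e > 0"
  shows "\<exists>K. closed K \<and> continuous_on K f \<and> measure M (- K) < e"
proof -
  interpret finite_measure M by fact
  obtain \<B> :: "'b set set" where \<B>: "countable \<B>" "topological_basis \<B>"
    using ex_countable_basis by blast
  have "\<B> \<noteq> {}"
    using \<B>(2) open_UNIV unfolding topological_basis_def by force
  define b where "b = from_nat_into \<B>"
  have range_b: "range b = \<B>"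
    unfolding b_def using \<B>(1) \<open>\<B> \<noteq> {}\<close> by (metis range_from_nat_into)
  have "open (b k)" for k using range_b \<B>(2) topological_basis_open by blast
  then have pre: "f -` b k \<in> sets borel" for k using measurable_sets[OF f borel_open] by simp
  have pos: "0 < e / 2 * (1 / 2) ^ Suc k" for k using e by simp
  have "\<forall>k. \<exists>C C'. C \<subseteq> f -` b k \<and> C' \<subseteq> - (f -` b k) \<and> compact C \<and> compact C' \<and>
      measure M (- (C \<union> C')) < e / 2 * (1 / 2) ^ Suc k"
    using compact_inner_approx_both_sides[OF sets_M fin pre pos] by blast
  then obtain C C' where C: "\<And>k. C k \<subseteq> f -` b k" "\<And>k. C' k \<subseteq> - (f -` b k)"
    "\<And>k. compact (C k)" "\<And>k. compact (C' k)" "\<And>k. measure M (- (C k \<union> C' k)) < e / 2 * (1 / 2) ^ Suc k"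
    by metis
  define K where "K = (\<Inter>k. C k \<union> C' k)"
  have "closed K"
    unfolding K_def using C(3,4) by (intro closed_INT ballI closed_Un compact_imp_closed) auto
  have gap_sets: "- (C k \<union> C' k) \<in> sets M" for k
    using C(3,4) sets_M by (metis borel_comp borel_compact sets.Un)
  have "measure M (\<Union>k. - (C k \<union> C' k)) \<le> e / 2"
  proof (rule measure_countable_Union_le)
    show "- (C k \<union> C' k) \<in> fmeasurable M" for k
      using gap_sets by (simp add: fmeasurable_def less_top[symmetric])
    have sums: "(\<lambda>k. e / 2 * (1 / 2) ^ Suc k) sums (e / 2)"
      using sums_mult[OF power_half_series, of "e / 2"] by simp
    fix n
    have "measure M (\<Union>k\<le>n. - (C k \<union> C' k)) \<le> (\<Sum>k\<le>n. measure M (- (C k \<union> C' k)))"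
      using gap_sets by (intro measure_UNION_le) auto
    also have "\<dots> \<le> (\<Sum>k<Suc n. e / 2 * (1 / 2) ^ Suc k)"
      unfolding lessThan_Suc_atMost using C(5) by (intro sum_mono less_imp_le)
    also have "\<dots> \<le> e / 2"
      using sums e by (intro sum_le_suminf[of _ "{..<Suc n}", THEN order_trans]) (auto simp: sums_iff)
    finally show "measure M (\<Union>k\<le>n. - (C k \<union> C' k)) \<le> e / 2" .
  qed
  moreover have "- K = (\<Union>k. - (C k \<union> C' k))" unfolding K_def by blast
  ultimately have "measure M (- K) < e" using e by simp
  moreover have "continuous_on K f"
  proof (rule continuous_on_if_basis_preimages_open[OF \<B>(2)])
    fix a
    assume "a \<in> \<B>"
    then obtain k where "a = b k" using range_b by blast
    moreover have "- C' k \<inter> K = f -` b k \<inter> K"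
      using C(1,2)[of k] unfolding K_def by blast
    moreover have "open (- C' k)" using C(4) by (simp add: open_Compl compact_imp_closed)
    ultimately show "\<exists>U. open U \<and> U \<inter> K = f -` a \<inter> K" by blast
  qed
  ultimately show ?thesis using \<open>closed K\<close> by blast
qed

lemma compact_continuous_approx:
  fixes M :: "'a::polish_space measure" and f :: "'a \<Rightarrow> 'b::second_countable_topology"
  assumes sets_M: "sets M = sets borel" and fin: "finite_measure M"
    and f: "f \<in> borel_measurable borel" and D: "D \<in> sets borel" and AE_D: "AE x in M. x \<in> D"
    and e: "e > 0"
  shows "\<exists>K\<subseteq>D. compact K \<and> continuous_on K f \<and> measure M (- K) < e"
proof -
  interpret finite_measure M by fact
  have space_M: "space M = UNIV" using sets_eq_imp_space_eq[OF sets_M] by simp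
  obtain K1 where K1: "closed K1" "continuous_on K1 f" "measure M (- K1) < e / 2"
    using lusin[OF sets_M fin f, of "e / 2"] e by auto
  obtain K2 where K2: "K2 \<subseteq> D" "compact K2" "measure M (D - K2) < e / 2"
    using compact_inner_approx[OF sets_M fin D, of "e / 2"] e by auto
  have sets: "- K1 \<in> sets M" "D - K2 \<in> sets M" "- D \<in> sets M"
    using K1(1) K2(2) D sets_M by (simp_all add: borel_comp borel_closed sets.Diff borel_compact)
  have "emeasure M (- D) = 0"
    using AE_D by (subst (asm) AE_iff_measurable[OF sets(3)]) (auto simp: space_M)
  then have "measure M (- D) = 0"
    by (simp add: measure_def)
  moreover have "measure M (- (K1 \<inter> K2)) \<le> measure M (- K1) + measure M (D - K2) + measure M (- D)"
  proof -
    have "- (K1 \<inter> K2) \<subseteq> - K1 \<union> (D - K2) \<union> - D" by blast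
    then have "measure M (- (K1 \<inter> K2)) \<le> measure M (- K1 \<union> (D - K2) \<union> - D)"
      using sets by (intro finite_measure_mono) auto
    also have "\<dots> \<le> measure M (- K1) + measure M (D - K2) + measure M (- D)"
      using sets by (intro order_trans[OF measure_Un_le] add_right_mono measure_Un_le) auto
    finally show ?thesis .
  qed
  ultimately have "measure M (- (K1 \<inter> K2)) < e" using K1(3) K2(3) by simp
  then show ?thesis
    using K1 K2 by (intro exI[of _ "K1 \<inter> K2"]) (auto intro: continuous_on_subset)
qed

text \<open>The image of a Borel set of full measure under a Borel map need not be Borel, but it contains
  the \<open>\<sigma>\<close>-compact set of full image measure obtained from Lusin's theorem.\<close>

lemma AE_distr_in_image:
  fixes M :: "'a::polish_space measure" and f :: "'a \<Rightarrow> 'b::{second_countable_topology, t2_space}"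
  assumes sets_M: "sets M = sets borel" and fin: "finite_measure M"
    and f: "f \<in> borel \<rightarrow>\<^sub>M N" and sets_N: "sets N = sets borel"
    and D: "D \<in> sets M" and AE_D: "AE x in M. x \<in> D"
  shows "AE y in distr M N f. y \<in> f ` D"
proof -
  interpret finite_measure M by fact
  have f_borel: "f \<in> borel_measurable borel"
    using f by (simp add: measurable_cong_sets[OF refl sets_N])
  have f_M: "f \<in> M \<rightarrow>\<^sub>M N"
    using f by (simp add: measurable_cong_sets[OF sets_M refl])
  have "\<forall>m::nat. \<exists>K\<subseteq>D. compact K \<and> continuous_on K f \<and> measure M (- K) < 1 / Suc m"
    using compact_continuous_approx[OF sets_M fin f_borel _ AE_D] D sets_M by simp
  then obtain K where K: "\<And>m. K m \<subseteq> D" "\<And>m. compact (K m)" "\<And>m. continuous_on (K m) f"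
    "\<And>m. measure M (- K m) < 1 / Suc m" by metis
  define B where "B = (\<Union>m. f ` K m)"
  have "f ` K m \<in> sets borel" for m
    using K(2,3) by (simp add: borel_compact compact_continuous_image)
  then have B_N: "B \<in> sets N"
    unfolding B_def sets_N by blast
  have K_M: "- (\<Union>m. K m) \<in> sets M"
    using K(2) sets_M by (auto intro!: borel_comp simp: borel_compact)
  have "measure M (- (\<Union>m. K m)) \<le> 0"
  proof (rule field_le_epsilon)
    fix d :: real
    assume "d > 0"
    then obtain m :: nat where m: "1 / Suc m < d"
      using nat_approx_posE by blast
    have "measure M (- (\<Union>m. K m)) \<le> measure M (- K m)"
      using K_M K(2) sets_M by (intro finite_measure_mono) (auto intro!: borel_comp simp: borel_compact)
    also have "\<dots> < d" using K(4)[of m] m by simp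
    finally show "measure M (- (\<Union>m. K m)) \<le> 0 + d" by simp
  qed
  then have "- (\<Union>m. K m) \<in> null_sets M"
    using K_M measure_nonneg[of M] by (simp add: null_sets_def emeasure_eq_measure order_antisym)
  then have "AE x in M. x \<in> (\<Union>m. K m)"
    by (rule AE_I') auto
  then have "AE x in M. f x \<in> B"
    unfolding B_def by (rule eventually_mono) blast
  then have "AE y in distr M N f. y \<in> B"
    using B_N f_M by (subst AE_distr_iff) auto
  then show ?thesis
    by (rule eventually_mono) (use K(1) in \<open>auto simp: B_def\<close>)
qed

section \<open>Conditional laws\<close>

lemma cond_law_version_return:
  assumes X: "X \<in> Q \<rightarrow>\<^sub>M MZ" and g: "g \<in> borel_measurable MZ"
    and Y: "Y \<in> borel_measurable Q" and AE_Y: "AE \<omega> in Q. Y \<omega> = g (X \<omega>)"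
  shows "cond_law_version Q X MZ Y (\<lambda>z. return borel (g z))"
  unfolding cond_law_version_def
proof (intro conjI ballI)
  show "(\<lambda>z. return borel (g z)) \<in> MZ \<rightarrow>\<^sub>M prob_algebra borel"
    by (intro measurable_prob_algebraI prob_space_return measurable_compose[OF g return_measurable]) auto
  fix A B
  assume A: "A \<in> sets (borel :: real measure)" and B: "B \<in> sets MZ"
  have "{\<omega> \<in> space Q. Y \<omega> \<in> A \<and> X \<omega> \<in> B} \<in> sets Q" "{\<omega> \<in> space Q. g (X \<omega>) \<in> A \<and> X \<omega> \<in> B} \<in> sets Q"
    using X Y g A B by measurable
  then have "emeasure Q {\<omega> \<in> space Q. Y \<omega> \<in> A \<and> X \<omega> \<in> B}
      = emeasure Q {\<omega> \<in> space Q. g (X \<omega>) \<in> A \<and> X \<omega> \<in> B}"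
    by (intro emeasure_eq_AE) (use AE_Y in \<open>auto elim!: eventually_mono\<close>)
  also have "\<dots> = (\<integral>\<^sup>+ \<omega>. indicator {\<omega> \<in> space Q. g (X \<omega>) \<in> A \<and> X \<omega> \<in> B} \<omega> \<partial>Q)"
    using \<open>{\<omega> \<in> space Q. g (X \<omega>) \<in> A \<and> X \<omega> \<in> B} \<in> sets Q\<close> by simp
  also have "\<dots> = (\<integral>\<^sup>+ \<omega>. indicator B (X \<omega>) * indicator A (g (X \<omega>)) \<partial>Q)"
    by (intro nn_integral_cong) (auto simp: indicator_def)
  also have "\<dots> = (\<integral>\<^sup>+ z. indicator B z * emeasure (return borel (g z)) A \<partial>distr Q MZ X)"
    using X g A B by (subst nn_integral_distr) auto
  finally show "emeasure Q {\<omega> \<in> space Q. Y \<omega> \<in> A \<and> X \<omega> \<in> B}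
      = (\<integral>\<^sup>+ z. indicator B z * emeasure (return borel (g z)) A \<partial>distr Q MZ X)" .
qed

lemma cond_law_version_joint_law_eq:
  assumes "cond_law_version Q X MZ Y K" and "cond_law_version Q X MZ Y' K'"
    and "AE z in distr Q MZ X. K z = K' z"
    and A: "A \<in> sets borel" and B: "B \<in> sets MZ"
  shows "emeasure Q {\<omega> \<in> space Q. Y' \<omega> \<in> A \<and> X \<omega> \<in> B} = emeasure Q {\<omega> \<in> space Q. Y \<omega> \<in> A \<and> X \<omega> \<in> B}"
proof -
  have "emeasure Q {\<omega> \<in> space Q. Y' \<omega> \<in> A \<and> X \<omega> \<in> B}
      = (\<integral>\<^sup>+ z. indicator B z * emeasure (K' z) A \<partial>distr Q MZ X)"
    using assms(2) A B unfolding cond_law_version_def by blast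
  also have "\<dots> = (\<integral>\<^sup>+ z. indicator B z * emeasure (K z) A \<partial>distr Q MZ X)"
    using assms(3) by (intro nn_integral_cong_AE) (auto elim!: eventually_mono)
  also have "\<dots> = emeasure Q {\<omega> \<in> space Q. Y \<omega> \<in> A \<and> X \<omega> \<in> B}"
    using assms(1) A B unfolding cond_law_version_def by simp
  finally show ?thesis .
qed

lemma real_eq_if_same_rational_cuts:
  fixes a b :: real
  assumes "\<forall>q\<in>\<rat>. (a < q \<longleftrightarrow> b < q)"
  shows "a = b"
proof (cases a b rule: linorder_cases)
  case less
  then obtain q where "q \<in> \<rat>" "a < q" "q < b" using Rats_dense_in_real by blast
  then show ?thesis using assms by auto
next
  case greater
  then obtain q where "q \<in> \<rat>" "b < q" "q < a" using Rats_dense_in_real by blast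
  then show ?thesis using assms by auto
qed

text \<open>Test the joint law on \<open>A \<times> g\<^sup>-\<^sup>1(-A)\<close> for the half-lines \<open>A\<close> with rational endpoints.\<close>

lemma AE_eq_comp_if_joint_law_eq:
  fixes g :: "'z \<Rightarrow> real"
  assumes X: "X \<in> Q \<rightarrow>\<^sub>M MZ" and g: "g \<in> borel_measurable MZ" and Y: "Y \<in> borel_measurable Q"
    and joint: "\<And>A B. A \<in> sets borel \<Longrightarrow> B \<in> sets MZ \<Longrightarrow>
      emeasure Q {\<omega> \<in> space Q. Y \<omega> \<in> A \<and> X \<omega> \<in> B} = emeasure Q {\<omega> \<in> space Q. g (X \<omega>) \<in> A \<and> X \<omega> \<in> B}"
  shows "AE \<omega> in Q. Y \<omega> = g (X \<omega>)"
proof -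
  have AE_in: "AE \<omega> in Q. Y \<omega> \<in> A \<longrightarrow> g (X \<omega>) \<in> A" if A: "A \<in> sets borel" for A :: "real set"
  proof -
    define B where "B = g -` (- A) \<inter> space MZ"
    have B: "B \<in> sets MZ" unfolding B_def using measurable_sets[OF g borel_comp[OF A]] .
    have N: "{\<omega> \<in> space Q. Y \<omega> \<in> A \<and> X \<omega> \<in> B} \<in> sets Q"
      using X Y A B by measurable
    have "emeasure Q {\<omega> \<in> space Q. Y \<omega> \<in> A \<and> X \<omega> \<in> B} = emeasure Q {}"
      unfolding joint[OF A B] by (rule arg_cong[where f = "emeasure Q"]) (auto simp: B_def)
    then show ?thesis
      using X by (subst AE_iff_measurable[OF N]) (auto simp: B_def measurable_space)
  qed
  have "AE \<omega> in Q. \<forall>q\<in>\<rat>. (Y \<omega> \<in> {..<q} \<longrightarrow> g (X \<omega>) \<in> {..<q}) \<and> (Y \<omega> \<in> {q..} \<longrightarrow> g (X \<omega>) \<in> {q..})"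
    by (simp only: AE_ball_countable[OF countable_rat] AE_conj_iff)
      (blast intro: AE_in lessThan_borel atLeast_borel)
  then show ?thesis
    by (rule eventually_mono) (auto intro!: real_eq_if_same_rational_cuts simp: not_less[symmetric])
qed

lemma cond_law_version_AE_eq_comp:
  assumes X: "X \<in> Q \<rightarrow>\<^sub>M MZ" and g: "g \<in> borel_measurable MZ"
    and Y: "Y \<in> borel_measurable Q" and Y': "Y' \<in> borel_measurable Q"
    and K: "cond_law_version Q X MZ Y K" and K': "cond_law_version Q X MZ Y' K'"
    and KK': "AE z in distr Q MZ X. K z = K' z" and AE_Y: "AE \<omega> in Q. Y \<omega> = g (X \<omega>)"
  shows "AE \<omega> in Q. Y' \<omega> = g (X \<omega>)"
proof (rule AE_eq_comp_if_joint_law_eq[OF X g Y'])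
  fix A :: "real set" and B
  assume A: "A \<in> sets borel" and B: "B \<in> sets MZ"
  have "{\<omega> \<in> space Q. Y \<omega> \<in> A \<and> X \<omega> \<in> B} \<in> sets Q" "{\<omega> \<in> space Q. g (X \<omega>) \<in> A \<and> X \<omega> \<in> B} \<in> sets Q"
    using X Y g A B by measurable
  then have "emeasure Q {\<omega> \<in> space Q. Y \<omega> \<in> A \<and> X \<omega> \<in> B}
      = emeasure Q {\<omega> \<in> space Q. g (X \<omega>) \<in> A \<and> X \<omega> \<in> B}"
    by (intro emeasure_eq_AE) (use AE_Y in \<open>auto elim!: eventually_mono\<close>)
  then show "emeasure Q {\<omega> \<in> space Q. Y' \<omega> \<in> A \<and> X \<omega> \<in> B}
      = emeasure Q {\<omega> \<in> space Q. g (X \<omega>) \<in> A \<and> X \<omega> \<in> B}"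
    using cond_law_version_joint_law_eq[OF K K' KK' A B] by simp
qed

section \<open>Solutions of acyclic structural causal models\<close>

definition parent_rel :: "('i \<Rightarrow> 'i set) \<Rightarrow> 'i rel" where
  "parent_rel Endo = {(k, l). k \<in> Endo l}"

lemma parent_rel_trancl_imp_scm_graph:
  "(k, l) \<in> (parent_rel Endo)\<^sup>+ \<Longrightarrow> (Inl k, Inl l) \<in> (scm_graph Endo Exo)\<^sup>+"
proof (induction rule: trancl_induct)
  case (base l)
  then show ?case by (auto simp: parent_rel_def scm_graph_def)
next
  case (step l m)
  then have "(Inl l, Inl m) \<in> scm_graph Endo Exo" by (auto simp: parent_rel_def scm_graph_def)
  with step.IH show ?case by (rule trancl_into_trancl)
qed

lemma acyclic_parent_rel: "assumption_A Endo Exo \<Longrightarrow> acyclic (parent_rel Endo)"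
  unfolding assumption_A_def acyclic_def using parent_rel_trancl_imp_scm_graph[of _ _ Endo Exo] by blast

lemma wf_parent_rel:
  fixes Endo :: "'i::finite \<Rightarrow> 'i set"
  shows "assumption_A Endo Exo \<Longrightarrow> wf (parent_rel Endo)"
  by (intro finite_acyclic_wf acyclic_parent_rel) auto

definition scm_step ::
  "('i \<Rightarrow> ('i \<Rightarrow> real) \<Rightarrow> ('j \<Rightarrow> real) \<Rightarrow> real) \<Rightarrow> ('j \<Rightarrow> real) \<Rightarrow> ('i \<Rightarrow> real) \<Rightarrow> 'i \<Rightarrow> real" where
  "scm_step G u v = (\<lambda>i. G i v u)"

lemma scm_step_apply: "scm_step G u v i = G i v u"
  by (simp add: scm_step_def)

text \<open>In an acyclic model, \<open>CARD('i)\<close> rounds of Jacobi iteration reach the unique solution.\<close>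

definition scm_iterate ::
  "('i::finite \<Rightarrow> ('i \<Rightarrow> real) \<Rightarrow> ('j \<Rightarrow> real) \<Rightarrow> real) \<Rightarrow> ('j \<Rightarrow> real) \<Rightarrow> 'i \<Rightarrow> real" where
  "scm_iterate G u = (scm_step G u ^^ CARD('i)) (\<lambda>_. 0)"

lemma fixpoint_eq_scm_iterate:
  fixes G :: "'i::finite \<Rightarrow> ('i \<Rightarrow> real) \<Rightarrow> ('j \<Rightarrow> real) \<Rightarrow> real"
  assumes A: "assumption_A Endo Exo" and dep: "depends_on_parents Endo Exo' G"
    and fixpoint: "\<And>i. v i = G i v u"
  shows "v = scm_iterate G u"
proof -
  define anc where "anc l = {k. (k, l) \<in> (parent_rel Endo)\<^sup>+}" for l
  have irrefl: "(l, l) \<notin> (parent_rel Endo)\<^sup>+" for l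
    using acyclic_parent_rel[OF A] by (simp add: acyclic_def)
  have anc_less: "anc k \<subset> anc l" if "k \<in> Endo l" for k l
    using that irrefl[of k] unfolding anc_def parent_rel_def by (auto intro: trancl_into_trancl)
  have "card (anc l) < n \<Longrightarrow> v l = (scm_step G u ^^ n) (\<lambda>_. 0) l" for l n
    using wf_parent_rel[OF A]
  proof (induction l arbitrary: n rule: wf_induct_rule)
    case (less l)
    then obtain m where n: "n = Suc m" and m: "card (anc l) \<le> m" by (cases n) auto
    have "v k = (scm_step G u ^^ m) (\<lambda>_. 0) k" if "k \<in> Endo l" for k
      using less.IH[of k m] psubset_card_mono[OF _ anc_less[OF that]] m that
      by (auto simp: parent_rel_def)
    then have "G l ((scm_step G u ^^ m) (\<lambda>_. 0)) u = G l v u"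
      using dep unfolding depends_on_parents_def by metis
    moreover have "(scm_step G u ^^ n) (\<lambda>_. 0) l = G l ((scm_step G u ^^ m) (\<lambda>_. 0)) u"
      by (simp add: n scm_step_apply)
    ultimately show ?case using fixpoint[of l] by simp
  qed
  moreover have "card (anc l) < CARD('i)" for l
    using irrefl[of l] by (intro psubset_card_mono) (auto simp: anc_def)
  ultimately show ?thesis by (auto simp: scm_iterate_def)
qed

lemma scm_iterate_cong:
  assumes dep: "depends_on_parents Endo Exo G" and u: "\<And>i. \<forall>j\<in>Exo i. u j = u' j"
  shows "scm_iterate G u = scm_iterate G u'"
proof -
  have "(scm_step G u ^^ n) v = (scm_step G u' ^^ n) v" for n v
  proof (induction n)
    case (Suc n)
    then show ?case
      using dep u unfolding depends_on_parents_def by (auto simp: scm_step_apply)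
  qed simp
  then show ?thesis by (simp add: scm_iterate_def)
qed

lemma scm_iterate_measurable:
  assumes "\<And>i. (\<lambda>(v, u). G i v u) \<in> borel_measurable (PiM UNIV (\<lambda>_. borel) \<Otimes>\<^sub>M PiM UNIV (\<lambda>_. borel))"
  shows "scm_iterate G \<in> PiM UNIV (\<lambda>_. borel) \<rightarrow>\<^sub>M PiM UNIV (\<lambda>_. borel)"
proof -
  have "(\<lambda>u. (scm_step G u ^^ n) (\<lambda>_. 0)) \<in> PiM UNIV (\<lambda>_. borel) \<rightarrow>\<^sub>M PiM UNIV (\<lambda>_. borel)" for n
  proof (induction n)
    case (Suc n)
    have meas: "(\<lambda>u. G i ((scm_step G u ^^ n) (\<lambda>_. 0)) u) \<in> borel_measurable (PiM UNIV (\<lambda>_. borel))" for i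
      using measurable_compose[OF measurable_Pair[OF Suc measurable_ident_sets[OF refl]] assms] by simp
    have "(\<lambda>u. (scm_step G u ^^ Suc n) (\<lambda>_. 0)) = (\<lambda>u i. G i ((scm_step G u ^^ n) (\<lambda>_. 0)) u)"
      by (simp add: scm_step_def)
    then show ?case
      by (simp only:) (rule measurable_PiM_single'; use meas in \<open>simp add: space_PiM\<close>)
  qed (simp add: space_PiM)
  then show ?thesis unfolding scm_iterate_def[abs_def] .
qed

lemma measurable_PiM_into_PiM_UNIV:
  "(\<lambda>u. u) \<in> PiM J (\<lambda>_. borel) \<rightarrow>\<^sub>M PiM UNIV (\<lambda>_. borel :: real measure)"
proof (rule measurable_PiM_single')
  fix j
  show "(\<lambda>u. u j) \<in> borel_measurable (PiM J (\<lambda>_. borel))"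
  proof (cases "j \<in> J")
    case True
    then show ?thesis by measurable
  next
    case False
    show ?thesis
      by (rule measurable_cong[THEN iffD2, of _ _ "\<lambda>_. undefined"])
        (use False in \<open>auto simp: space_PiM PiE_def extensional_def\<close>)
  qed
qed (auto simp: space_PiM)

locale acyclic_scm =
  fixes P :: "'w measure"
    and Usp :: "'j::finite \<Rightarrow> real set"
    and U :: "'w \<Rightarrow> 'j \<Rightarrow> real"
    and Endo :: "'n::finite option \<Rightarrow> 'n option set"
    and Exo :: "'n option \<Rightarrow> 'j set"
    and G :: "'n option \<Rightarrow> ('n option \<Rightarrow> real) \<Rightarrow> ('j \<Rightarrow> real) \<Rightarrow> real"
    and V :: "'w \<Rightarrow> 'n option \<Rightarrow> real"
    and Vdo :: "real \<Rightarrow> 'w \<Rightarrow> 'n option \<Rightarrow> real"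
    and Ss :: "real set"
  assumes scm: "is_SCM P Usp U Endo Exo G"
    and A: "assumption_A Endo Exo"
    and sol: "is_solution P U G V"
    and sol_do: "\<forall>s\<in>Ss. is_solution P U (do_S G s) (Vdo s)"
begin

sublocale prob_space P
  using scm by (simp add: is_SCM_def)

lemma U_measurable: "U \<in> P \<rightarrow>\<^sub>M PiM UNIV (\<lambda>_. borel)"
  using scm by (simp add: is_SCM_def)

lemma V_measurable: "V \<in> P \<rightarrow>\<^sub>M PiM UNIV (\<lambda>_. borel)"
  using sol by (simp add: is_solution_def)

lemma Vdo_measurable: "t \<in> Ss \<Longrightarrow> Vdo t \<in> P \<rightarrow>\<^sub>M PiM UNIV (\<lambda>_. borel)"
  using sol_do by (simp add: is_solution_def)

lemma Xof_measurable: "W \<in> P \<rightarrow>\<^sub>M PiM UNIV (\<lambda>_. borel) \<Longrightarrow> Xof W \<in> P \<rightarrow>\<^sub>M MX"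
  unfolding MX_def Xof_def
  by (rule measurable_PiM_single') (auto intro: measurable_compose[OF _ measurable_component_singleton] simp: space_PiM)

lemma Sof_measurable: "Sof V \<in> borel_measurable P"
  unfolding Sof_def using V_measurable by (rule measurable_compose[OF _ measurable_component_singleton]) simp

lemma UX_measurable: "UX Exo U \<in> P \<rightarrow>\<^sub>M PiM (JX Exo) (\<lambda>_. borel)"
  unfolding UX_def using U_measurable
  by (intro measurable_restrict) (auto intro: measurable_compose[OF _ measurable_component_singleton])

lemma US_measurable: "US Exo U \<in> P \<rightarrow>\<^sub>M PiM (Exo None) (\<lambda>_. borel)"
  unfolding US_def using U_measurable
  by (intro measurable_restrict) (auto intro: measurable_compose[OF _ measurable_component_singleton])

lemma G_measurable:
  "(\<lambda>(v, u). G i v u) \<in> borel_measurable (PiM UNIV (\<lambda>_. borel) \<Otimes>\<^sub>M PiM UNIV (\<lambda>_. borel))"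
  using scm by (simp add: is_SCM_def)

lemma do_S_simps [simp]: "do_S G t None v u = t" "do_S G t (Some i) v u = G (Some i) v u"
  by (simp_all add: do_S_def do_intervention_def)

text \<open>The intervened node \<open>S\<close> has no exogenous parents any more.\<close>

lemma depends_on_parents_do_S: "depends_on_parents Endo (Exo(None := {})) (do_S G t)"
proof -
  have dep: "depends_on_parents Endo Exo G" using scm by (simp add: is_SCM_def)
  show ?thesis unfolding depends_on_parents_def
  proof (intro allI impI)
    fix l and v v' :: "'n option \<Rightarrow> real" and u u' :: "'j \<Rightarrow> real"
    assume "\<forall>k\<in>Endo l. v k = v' k" and "\<forall>j\<in>(Exo(None := {})) l. u j = u' j"
    then show "do_S G t l v u = do_S G t l v' u'"
      using dep unfolding depends_on_parents_def by (cases l) auto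
  qed
qed

lemma AE_structural_equations:
  fixes W :: "'w \<Rightarrow> 'n option \<Rightarrow> real"
  shows "is_solution P U G' W \<Longrightarrow> AE \<omega> in P. \<forall>l. W \<omega> l = G' l (W \<omega>) (U \<omega>)"
  using AE_finite_allI[where S = UNIV and M = P and Q = "\<lambda>l \<omega>. W \<omega> l = G' l (W \<omega>) (U \<omega>)"]
  by (simp add: is_solution_def)

lemma Vdo_eq_scm_iterate:
  assumes "t \<in> Ss"
  shows "AE \<omega> in P. Vdo t \<omega> = scm_iterate (do_S G t) (U \<omega>)"
proof -
  have "AE \<omega> in P. \<forall>l. Vdo t \<omega> l = do_S G t l (Vdo t \<omega>) (U \<omega>)"
    using AE_structural_equations sol_do assms by blast
  then show ?thesis
    by (rule eventually_mono) (rule fixpoint_eq_scm_iterate[OF A depends_on_parents_do_S], blast)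
qed

text \<open>Where \<open>S = t\<close> already holds, the factual solution also solves the intervened model.\<close>

lemma V_eq_scm_iterate: "AE \<omega> in P. Sof V \<omega> = t \<longrightarrow> V \<omega> = scm_iterate (do_S G t) (U \<omega>)"
proof -
  from AE_structural_equations[OF sol] show ?thesis
  proof (rule eventually_mono, intro impI)
    fix \<omega>
    assume "\<forall>l. V \<omega> l = G l (V \<omega>) (U \<omega>)" and "Sof V \<omega> = t"
    then have "V \<omega> l = do_S G t l (V \<omega>) (U \<omega>)" for l
      by (cases l) (auto simp: Sof_def)
    then show "V \<omega> = scm_iterate (do_S G t) (U \<omega>)"
      by (rule fixpoint_eq_scm_iterate[OF A depends_on_parents_do_S])
  qed
qed

lemma Xdo_eq_X_on_S:
  assumes "t \<in> Ss"
  shows "AE \<omega> in P. Sof V \<omega> = t \<longrightarrow> Xof (Vdo t) \<omega> = Xof V \<omega>"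
  using Vdo_eq_scm_iterate[OF assms] V_eq_scm_iterate[of t] by eventually_elim (simp add: Xof_def)

definition X_do :: "real \<Rightarrow> ('j \<Rightarrow> real) \<Rightarrow> 'n \<Rightarrow> real" where
  "X_do t u = (\<lambda>i. scm_iterate (do_S G t) u (Some i))"

lemma X_do_measurable: "X_do t \<in> PiM J (\<lambda>_. borel) \<rightarrow>\<^sub>M MX"
proof -
  have "scm_iterate (do_S G t) \<in> PiM UNIV (\<lambda>_. borel) \<rightarrow>\<^sub>M PiM UNIV (\<lambda>_. borel)"
  proof (rule scm_iterate_measurable)
    fix l
    show "(\<lambda>(v, u). do_S G t l v u) \<in> borel_measurable (PiM UNIV (\<lambda>_. borel) \<Otimes>\<^sub>M PiM UNIV (\<lambda>_. borel))"
      using G_measurable by (cases l) simp_all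
  qed
  from measurable_compose[OF measurable_PiM_into_PiM_UNIV this]
  show ?thesis unfolding X_do_def[abs_def] MX_def
    by (intro measurable_PiM_single') (auto intro: measurable_compose[OF _ measurable_component_singleton] simp: space_PiM)
qed

lemma Xdo_eq_X_do_UX:
  assumes "t \<in> Ss"
  shows "AE \<omega> in P. Xof (Vdo t) \<omega> = X_do t (UX Exo U \<omega>)"
proof -
  have "scm_iterate (do_S G t) (U \<omega>) = scm_iterate (do_S G t) (UX Exo U \<omega>)" for \<omega>
    by (rule scm_iterate_cong[OF depends_on_parents_do_S]) (auto simp: UX_def JX_def)
  with Vdo_eq_scm_iterate[OF assms] show ?thesis
    by (auto simp: Xof_def X_do_def elim!: eventually_mono)
qed

text \<open>Under (RE), \<open>S\<close> has no endogenous parents at all: none among \<open>X\<close> by assumption, and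
  not itself by acyclicity.\<close>

lemma S_eq_of_US:
  assumes RE: "assumption_RE P U Endo Exo"
  shows "AE \<omega> in P. Sof V \<omega> = G None (\<lambda>_. 0) (US Exo U \<omega>)"
proof -
  have "(None, None) \<notin> (parent_rel Endo)\<^sup>+"
    using acyclic_parent_rel[OF A] by (simp add: acyclic_def)
  then have "None \<notin> Endo None" by (auto simp: parent_rel_def)
  with RE have "Endo None = {}"
    unfolding assumption_RE_def by (metis equals0I not_None_eq)
  moreover have "depends_on_parents Endo Exo G" using scm by (simp add: is_SCM_def)
  ultimately have G_None: "G None (V \<omega>) (U \<omega>) = G None (\<lambda>_. 0) (US Exo U \<omega>)" for \<omega>
    unfolding depends_on_parents_def by (simp add: US_def)
  from AE_structural_equations[OF sol] show ?thesis
  proof (rule eventually_mono)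
    fix \<omega>
    assume "\<forall>l. V \<omega> l = G l (V \<omega>) (U \<omega>)"
    then have "V \<omega> None = G None (V \<omega>) (U \<omega>)" by blast
    then show "Sof V \<omega> = G None (\<lambda>_. 0) (US Exo U \<omega>)" by (simp add: Sof_def G_None)
  qed
qed

end

section \<open>Counterfactual fairness\<close>

locale cf_setting = acyclic_scm P Usp U Endo Exo G V Vdo Ss
  for P :: "'w measure" and Usp :: "'j::finite \<Rightarrow> real set" and U Endo
    and Exo :: "'n::finite option \<Rightarrow> 'j set" and G V Vdo Ss +
  fixes h :: "('n \<Rightarrow> real) \<Rightarrow> real \<Rightarrow> real"
  assumes S_pos: "\<forall>s\<in>Ss. measure P {\<omega> \<in> space P. Sof V \<omega> = s} > 0"
    and h_measurable: "(\<lambda>(x, s). h x s) \<in> borel_measurable (MX \<Otimes>\<^sub>M borel)"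
begin

abbreviation Q :: "real \<Rightarrow> 'w measure" where
  "Q s \<equiv> cond_S P V s"

definition S_event :: "real \<Rightarrow> 'w set" where
  "S_event t = {\<omega> \<in> space P. Sof V \<omega> = t}"

lemma S_event_sets [measurable]: "S_event t \<in> sets P"
  unfolding S_event_def using Sof_measurable by measurable

lemma sets_cond_S [simp, measurable_cong]: "sets (Q s) = sets P"
  by (simp add: cond_S_def)

lemma space_cond_S [simp]: "space (Q s) = space P"
  by (simp add: cond_S_def)

lemma measurable_cond_S: "f \<in> P \<rightarrow>\<^sub>M N \<Longrightarrow> f \<in> Q s \<rightarrow>\<^sub>M N"
  by (simp add: measurable_cong_sets[OF sets_cond_S refl])

lemma prob_space_cond_S: "s \<in> Ss \<Longrightarrow> prob_space (Q s)"
  unfolding cond_S_def using S_pos S_event_sets unfolding S_event_def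
  by (intro prob_space_uniform_measure) (auto simp: emeasure_eq_measure)

lemma AE_cond_S_iff: "s \<in> Ss \<Longrightarrow> (AE \<omega> in Q s. R \<omega>) \<longleftrightarrow> (AE \<omega> in P. Sof V \<omega> = s \<longrightarrow> R \<omega>)"
  unfolding cond_S_def using S_pos S_event_sets[of s]
  by (subst AE_uniform_measure) (auto simp: emeasure_eq_measure S_event_def intro!: AE_cong)

lemma h_measurable_comp:
  "f \<in> N \<rightarrow>\<^sub>M MX \<Longrightarrow> g \<in> borel_measurable N \<Longrightarrow> (\<lambda>x. h (f x) (g x)) \<in> borel_measurable N"
  using measurable_compose[OF measurable_Pair h_measurable] by simp

lemma X_measurable_cond_S: "Xof V \<in> Q s \<rightarrow>\<^sub>M MX"
  by (intro measurable_cond_S Xof_measurable V_measurable)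

lemma Xdo_measurable_cond_S: "t \<in> Ss \<Longrightarrow> Xof (Vdo t) \<in> Q s \<rightarrow>\<^sub>M MX"
  by (intro measurable_cond_S Xof_measurable Vdo_measurable)

text \<open>The condition to which all four characterisations reduce.\<close>

definition cf_agree :: "real \<Rightarrow> real \<Rightarrow> bool" where
  "cf_agree s s' \<longleftrightarrow> (AE \<omega> in Q s. h (Xof V \<omega>) s = h (Xof (Vdo s') \<omega>) s')"

lemma AE_pi_star_iff_cf_agree:
  assumes "s' \<in> Ss"
  shows "(AE p in pi_star P V Vdo s s'. h (fst p) s = h (snd p) s') \<longleftrightarrow> cf_agree s s'"
proof -
  have "(\<lambda>\<omega>. (Xof V \<omega>, Xof (Vdo s') \<omega>)) \<in> Q s \<rightarrow>\<^sub>M MX \<Otimes>\<^sub>M MX"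
    using X_measurable_cond_S Xdo_measurable_cond_S[OF assms] by (rule measurable_Pair)
  moreover have "(\<lambda>p. h (fst p) s) \<in> borel_measurable (MX \<Otimes>\<^sub>M MX)" "(\<lambda>p. h (snd p) s') \<in> borel_measurable (MX \<Otimes>\<^sub>M MX)"
    by (auto intro!: h_measurable_comp)
  then have "{p \<in> space (MX \<Otimes>\<^sub>M MX). h (fst p) s = h (snd p) s'} \<in> sets (MX \<Otimes>\<^sub>M MX)"
    by measurable
  ultimately show ?thesis
    unfolding pi_star_def cf_agree_def by (subst AE_distr_iff) simp_all
qed

lemma h_Xdo_eq_on_S:
  assumes "s \<in> Ss"
  shows "AE \<omega> in Q s. h (Xof (Vdo s) \<omega>) s = h (Xof V \<omega>) s"
  using Xdo_eq_X_on_S[OF assms] by (subst AE_cond_S_iff[OF assms]) (auto elim!: eventually_mono)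

text \<open>Both conditional laws in \<open>cf_fair\<close> are then Dirac kernels at \<open>h(x, s)\<close>.\<close>

lemma cf_fair_iff_cf_agree: "cf_fair P V Vdo Ss h \<longleftrightarrow> (\<forall>s\<in>Ss. \<forall>s'\<in>Ss. cf_agree s s')"
proof (intro iffI ballI)
  fix s s'
  assume "cf_fair P V Vdo Ss h" and s: "s \<in> Ss" and s': "s' \<in> Ss"
  then obtain K K' where K: "cond_law_version (Q s) (Xof V) MX (\<lambda>\<omega>. h (Xof (Vdo s) \<omega>) s) K"
    and K': "cond_law_version (Q s) (Xof V) MX (\<lambda>\<omega>. h (Xof (Vdo s') \<omega>) s') K'"
    and KK': "AE x in mu P V s. K x = K' x"
    unfolding cf_fair_def by blast
  have "AE \<omega> in Q s. h (Xof (Vdo s') \<omega>) s' = h (Xof V \<omega>) s"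
    by (rule cond_law_version_AE_eq_comp[where g = "\<lambda>x. h x s",
          OF X_measurable_cond_S _ _ _ K K' KK'[unfolded mu_def] h_Xdo_eq_on_S[OF s]])
      (auto intro!: h_measurable_comp Xdo_measurable_cond_S X_measurable_cond_S s s')
  then show "cf_agree s s'" unfolding cf_agree_def by (auto elim!: eventually_mono)
next
  assume agree: "\<forall>s\<in>Ss. \<forall>s'\<in>Ss. cf_agree s s'"
  show "cf_fair P V Vdo Ss h" unfolding cf_fair_def
  proof (intro ballI exI conjI)
    fix s s'
    assume s: "s \<in> Ss" and s': "s' \<in> Ss"
    show "cond_law_version (Q s) (Xof V) MX (\<lambda>\<omega>. h (Xof (Vdo s) \<omega>) s) (\<lambda>x. return borel (h x s))"
      by (rule cond_law_version_return[where g = "\<lambda>x. h x s", OF X_measurable_cond_S _ _ h_Xdo_eq_on_S[OF s]])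
        (auto intro!: h_measurable_comp Xdo_measurable_cond_S s)
    have "cf_agree s s'" using agree s s' by blast
    then have AE_eq: "AE \<omega> in Q s. h (Xof (Vdo s') \<omega>) s' = h (Xof V \<omega>) s"
      unfolding cf_agree_def by (rule eventually_mono) simp
    show "cond_law_version (Q s) (Xof V) MX (\<lambda>\<omega>. h (Xof (Vdo s') \<omega>) s') (\<lambda>x. return borel (h x s))"
      by (rule cond_law_version_return[where g = "\<lambda>x. h x s", OF X_measurable_cond_S _ _ AE_eq])
        (auto intro!: h_measurable_comp Xdo_measurable_cond_S s')
  qed simp
qed

lemma cf_agree_refl: "s \<in> Ss \<Longrightarrow> cf_agree s s"
  unfolding cf_agree_def by (drule h_Xdo_eq_on_S) (auto elim!: eventually_mono)

definition disagree :: "real \<Rightarrow> real \<Rightarrow> 'w set" where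
  "disagree s s' = {\<omega> \<in> space P. h (Xof (Vdo s) \<omega>) s \<noteq> h (Xof (Vdo s') \<omega>) s'}"

lemma disagree_sets: "s \<in> Ss \<Longrightarrow> s' \<in> Ss \<Longrightarrow> disagree s s' \<in> sets P"
  unfolding disagree_def
  by (intro borel_measurable_neq h_measurable_comp Xof_measurable Vdo_measurable measurable_const) simp_all

lemma cf_agree_iff_null:
  assumes s: "s \<in> Ss" and s': "s' \<in> Ss"
  shows "cf_agree s s' \<longleftrightarrow> measure P (disagree s s' \<inter> S_event s) = 0"
proof -
  have N: "disagree s s' \<inter> S_event s \<in> sets P" using disagree_sets[OF s s'] by simp
  have "cf_agree s s' \<longleftrightarrow> (AE \<omega> in P. Sof V \<omega> = s \<longrightarrow> h (Xof V \<omega>) s = h (Xof (Vdo s') \<omega>) s')"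
    unfolding cf_agree_def by (rule AE_cond_S_iff[OF s])
  also have "\<dots> \<longleftrightarrow> (AE \<omega> in P. \<omega> \<notin> disagree s s' \<inter> S_event s)"
  proof
    assume "AE \<omega> in P. Sof V \<omega> = s \<longrightarrow> h (Xof V \<omega>) s = h (Xof (Vdo s') \<omega>) s'"
    with Xdo_eq_X_on_S[OF s] show "AE \<omega> in P. \<omega> \<notin> disagree s s' \<inter> S_event s"
      by eventually_elim (auto simp: disagree_def S_event_def)
  next
    assume "AE \<omega> in P. \<omega> \<notin> disagree s s' \<inter> S_event s"
    with Xdo_eq_X_on_S[OF s] AE_space
    show "AE \<omega> in P. Sof V \<omega> = s \<longrightarrow> h (Xof V \<omega>) s = h (Xof (Vdo s') \<omega>) s'"
      by eventually_elim (auto simp: disagree_def S_event_def)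
  qed
  also have "\<dots> \<longleftrightarrow> measure P (disagree s s' \<inter> S_event s) = 0"
    using N by (subst AE_iff_measurable[OF N]) (auto simp: emeasure_eq_measure dest: sets.sets_into_space)
  finally show ?thesis .
qed

text \<open>Under (RE), the disagreement event is a function of \<open>U\<^sub>X\<close> and the event \<open>S = t\<close> one of
  \<open>U\<^sub>S\<close>, so they are independent.\<close>

lemma measure_disagree_Int_S_event:
  assumes RE: "assumption_RE P U Endo Exo" and s: "s \<in> Ss" and s': "s' \<in> Ss"
  shows "measure P (disagree s s' \<inter> S_event t) = measure P (S_event t) * measure P (disagree s s')"
proof -
  define D where "D = {u \<in> space (PiM (JX Exo) (\<lambda>_. borel)). h (X_do s u) s \<noteq> h (X_do s' u) s'}"
  define C where "C = {u \<in> space (PiM (Exo None) (\<lambda>_. borel)). G None (\<lambda>_. 0) u = t}"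
  have D_sets: "D \<in> sets (PiM (JX Exo) (\<lambda>_. borel))"
    unfolding D_def by (intro borel_measurable_neq h_measurable_comp X_do_measurable measurable_const) simp_all
  have "(\<lambda>u. G None (\<lambda>_. 0) u) \<in> borel_measurable (PiM (Exo None) (\<lambda>_. borel))"
    using measurable_compose[OF measurable_Pair[OF measurable_const measurable_PiM_into_PiM_UNIV] G_measurable]
    by (simp add: space_PiM)
  then have C_sets: "C \<in> sets (PiM (Exo None) (\<lambda>_. borel))"
    unfolding C_def by (intro borel_measurable_eq measurable_const) simp_all
  have UX_D: "UX Exo U -` D \<inter> space P \<in> sets P" using UX_measurable D_sets by (rule measurable_sets)
  have US_C: "US Exo U -` C \<inter> space P \<in> sets P" using US_measurable C_sets by (rule measurable_sets)
  have disagree_eq: "measure P (disagree s s') = measure P (UX Exo U -` D \<inter> space P)"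
    and AE_disagree: "AE \<omega> in P. \<omega> \<in> disagree s s' \<longleftrightarrow> \<omega> \<in> UX Exo U -` D \<inter> space P"
  proof -
    show AE: "AE \<omega> in P. \<omega> \<in> disagree s s' \<longleftrightarrow> \<omega> \<in> UX Exo U -` D \<inter> space P"
      using Xdo_eq_X_do_UX[OF s] Xdo_eq_X_do_UX[OF s'] AE_space
      by eventually_elim (auto simp: disagree_def D_def measurable_space[OF UX_measurable])
    show "measure P (disagree s s') = measure P (UX Exo U -` D \<inter> space P)"
      by (rule measure_eq_AE[OF AE disagree_sets[OF s s'] UX_D])
  qed
  have S_event_eq: "measure P (S_event t) = measure P (US Exo U -` C \<inter> space P)"
    and AE_S_event: "AE \<omega> in P. \<omega> \<in> S_event t \<longleftrightarrow> \<omega> \<in> US Exo U -` C \<inter> space P"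
  proof -
    show AE: "AE \<omega> in P. \<omega> \<in> S_event t \<longleftrightarrow> \<omega> \<in> US Exo U -` C \<inter> space P"
      using S_eq_of_US[OF RE] AE_space
      by eventually_elim (auto simp: S_event_def C_def measurable_space[OF US_measurable])
    show "measure P (S_event t) = measure P (US Exo U -` C \<inter> space P)"
      by (rule measure_eq_AE[OF AE S_event_sets US_C])
  qed
  have "(\<lambda>\<omega>. (US Exo U \<omega>, UX Exo U \<omega>)) -` (C \<times> D) \<inter> space P
      = (UX Exo U -` D \<inter> space P) \<inter> (US Exo U -` C \<inter> space P)"
    by auto
  moreover have "measure P (disagree s s' \<inter> S_event t)
      = measure P ((UX Exo U -` D \<inter> space P) \<inter> (US Exo U -` C \<inter> space P))"
    using AE_disagree AE_S_event disagree_sets[OF s s'] US_C UX_D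
    by (intro measure_eq_AE) (auto elim: eventually_mono)
  ultimately have "measure P (disagree s s' \<inter> S_event t)
      = measure P ((\<lambda>\<omega>. (US Exo U \<omega>, UX Exo U \<omega>)) -` (C \<times> D) \<inter> space P)"
    by simp
  also have "\<dots> = measure P (US Exo U -` C \<inter> space P) * measure P (UX Exo U -` D \<inter> space P)"
    using RE C_sets D_sets unfolding assumption_RE_def by (intro indep_varD) auto
  finally show ?thesis unfolding disagree_eq S_event_eq .
qed

lemma cf_agree_sym:
  assumes RE: "assumption_RE P U Endo Exo" and s: "s \<in> Ss" and s': "s' \<in> Ss"
    and agree: "cf_agree s s'"
  shows "cf_agree s' s"
proof -
  have "disagree s' s = disagree s s'" by (auto simp: disagree_def)
  moreover have "measure P (S_event s) > 0" using S_pos s by (simp add: S_event_def)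
  then have "measure P (disagree s s') = 0"
    using agree unfolding cf_agree_iff_null[OF s s'] measure_disagree_Int_S_event[OF RE s s']
    by simp
  ultimately show ?thesis
    unfolding cf_agree_iff_null[OF s' s] measure_disagree_Int_S_event[OF RE s' s] by simp
qed

lemma cf_agree_all_iff_ordered:
  assumes RE: "assumption_RE P U Endo Exo"
  shows "(\<forall>s\<in>Ss. \<forall>s'\<in>Ss. cf_agree s s') \<longleftrightarrow> (\<forall>s\<in>Ss. \<forall>s'\<in>Ss. s < s' \<longrightarrow> cf_agree s s')"
proof (intro iffI ballI)
  fix s s'
  assume ordered: "\<forall>s\<in>Ss. \<forall>s'\<in>Ss. s < s' \<longrightarrow> cf_agree s s'" and s: "s \<in> Ss" and s': "s' \<in> Ss"
  show "cf_agree s s'"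
  proof (cases s s' rule: linorder_cases)
    case equal
    then show ?thesis using cf_agree_refl s by simp
  next
    case greater
    then show ?thesis using ordered cf_agree_sym[OF RE s' s] s s' by blast
  qed (use ordered s s' in blast)
qed blast

lemma UX_measurable_borel: "UX Exo U \<in> P \<rightarrow>\<^sub>M borel"
  using measurable_compose[OF UX_measurable measurable_PiM_into_PiM_UNIV]
  by (simp add: measurable_cong_sets[OF refl sets_PiM_equal_borel])

lemma UX_in_PiE: "\<omega> \<in> space P \<Longrightarrow> UX Exo U \<omega> \<in> PiE (JX Exo) Usp"
  using scm by (auto simp: is_SCM_def UX_def)

lemma PiE_Usp_in_sets_borel: "PiE (JX Exo) Usp \<in> sets borel"
proof -
  define W where "W j = (if j \<in> JX Exo then Usp j else {undefined})" for j
  have "PiE (JX Exo) Usp = PiE UNIV W"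
    unfolding W_def by (auto simp: PiE_def Pi_def extensional_def split: if_splits)
  moreover have "PiE UNIV W \<in> sets (PiM UNIV (\<lambda>_. borel :: real measure))"
    using scm unfolding is_SCM_def W_def by (intro sets_PiM_I_finite) auto
  ultimately show ?thesis by (simp add: sets_PiM_equal_borel)
qed

text \<open>\<open>F t\<close> only sees the coordinates in \<open>JX\<close>; it is extended to all exogenous vectors by
  restriction, so that it becomes a Borel map on the polish space \<open>'j \<Rightarrow> real\<close>.\<close>

lemma F_restrict_measurable:
  assumes "F_rep P U Exo V Vdo Ss F"
  shows "(\<lambda>u. F t (restrict u (JX Exo))) \<in> borel \<rightarrow>\<^sub>M MX"
proof -
  have "(\<lambda>u. (t, restrict u (JX Exo))) \<in> PiM UNIV (\<lambda>_. borel) \<rightarrow>\<^sub>M borel \<Otimes>\<^sub>M PiM (JX Exo) (\<lambda>_. borel)"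
    by (intro measurable_Pair measurable_const measurable_restrict_subset) auto
  moreover have "(\<lambda>(s, u). F s u) \<in> borel \<Otimes>\<^sub>M PiM (JX Exo) (\<lambda>_. borel) \<rightarrow>\<^sub>M MX"
    using assms by (simp add: F_rep_def)
  ultimately have "(\<lambda>u. F t (restrict u (JX Exo))) \<in> PiM UNIV (\<lambda>_. borel) \<rightarrow>\<^sub>M MX"
    using measurable_compose by fastforce
  then show ?thesis by (simp add: measurable_cong_sets[OF sets_PiM_equal_borel refl])
qed

lemma AE_X_eq_F:
  assumes F: "F_rep P U Exo V Vdo Ss F" and s: "s \<in> Ss"
  shows "AE \<omega> in Q s. Xof V \<omega> = F s (UX Exo U \<omega>)"
proof -
  have "AE \<omega> in P. Xof V \<omega> = F (Sof V \<omega>) (UX Exo U \<omega>)" using F by (simp add: F_rep_def)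
  then show ?thesis by (subst AE_cond_S_iff[OF s]) (auto elim: eventually_mono)
qed

lemma AE_Xdo_eq_F:
  assumes F: "F_rep P U Exo V Vdo Ss F" and s: "s \<in> Ss" and t: "t \<in> Ss"
  shows "AE \<omega> in Q s. Xof (Vdo t) \<omega> = F t (UX Exo U \<omega>)"
proof -
  have "AE \<omega> in P. Xof (Vdo t) \<omega> = F t (UX Exo U \<omega>)" using F t by (simp add: F_rep_def)
  then show ?thesis by (subst AE_cond_S_iff[OF s]) (auto elim: eventually_mono)
qed

lemma mu_eq_distr_F:
  assumes F: "F_rep P U Exo V Vdo Ss F" and s: "s \<in> Ss"
  shows "mu P V s = distr (distr (Q s) borel (UX Exo U)) MX (\<lambda>u. F s (restrict u (JX Exo)))"
proof -
  have "mu P V s = distr (Q s) MX (\<lambda>\<omega>. F s (restrict (UX Exo U \<omega>) (JX Exo)))"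
    unfolding mu_def using AE_X_eq_F[OF F s] X_measurable_cond_S
      measurable_compose[OF measurable_cond_S[OF UX_measurable_borel] F_restrict_measurable[OF F]]
    by (intro distr_cong_AE) (auto simp: UX_def elim!: eventually_mono)
  also have "\<dots> = distr (distr (Q s) borel (UX Exo U)) MX (\<lambda>u. F s (restrict u (JX Exo)))"
    using distr_distr[OF F_restrict_measurable[OF F] measurable_cond_S[OF UX_measurable_borel]]
    by (simp add: comp_def)
  finally show ?thesis .
qed

lemma T_star_F:
  assumes "assumption_I Usp Exo Ss F" and "s \<in> Ss" and "u \<in> PiE (JX Exo) Usp"
  shows "T_star Usp Exo F s s' (F s u) = F s' u"
  using assms by (simp add: T_star_def assumption_I_def the_inv_into_f_f)

text \<open>The set \<open>{x. h(x, s) = h(T(x), s')}\<close> need not be measurable, so \<open>\<mu>\<^sub>s\<close>-almost every \<open>x\<close> lies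
  in it only thanks to \<open>AE_distr_in_image\<close>.\<close>

lemma AE_mu_T_star_iff_cf_agree:
  assumes F: "F_rep P U Exo V Vdo Ss F" and I: "assumption_I Usp Exo Ss F"
    and s: "s \<in> Ss" and s': "s' \<in> Ss"
  shows "(AE x in mu P V s. h x s = h (T_star Usp Exo F s s' x) s') \<longleftrightarrow> cf_agree s s'"
proof
  assume "AE x in mu P V s. h x s = h (T_star Usp Exo F s s' x) s'"
  then have "AE \<omega> in Q s. h (Xof V \<omega>) s = h (T_star Usp Exo F s s' (Xof V \<omega>)) s'"
    unfolding mu_def by (rule AE_distrD[OF X_measurable_cond_S])
  with AE_X_eq_F[OF F s] AE_Xdo_eq_F[OF F s s'] AE_space show "cf_agree s s'"
    unfolding cf_agree_def by eventually_elim (simp add: T_star_F[OF I s] UX_in_PiE)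
next
  assume agree: "cf_agree s s'"
  define f where "f t u = F t (restrict u (JX Exo))" for t u
  define M where "M = distr (Q s) borel (UX Exo U)"
  define D where "D = PiE (JX Exo) Usp \<inter> {u \<in> space borel. h (f s u) s = h (f s' u) s'}"
  have UX_M: "UX Exo U \<in> Q s \<rightarrow>\<^sub>M borel"
    by (rule measurable_cond_S[OF UX_measurable_borel])
  have D_sets: "D \<in> sets borel"
    unfolding D_def f_def using PiE_Usp_in_sets_borel
    by (intro sets.Int borel_measurable_eq h_measurable_comp F_restrict_measurable[OF F] measurable_const) simp_all
  have "AE \<omega> in Q s. UX Exo U \<omega> \<in> D"
    using agree[unfolded cf_agree_def] AE_X_eq_F[OF F s] AE_Xdo_eq_F[OF F s s'] AE_space
    by eventually_elim (simp add: D_def f_def UX_in_PiE, simp add: UX_def)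
  then have AE_D: "AE u in M. u \<in> D"
    unfolding M_def using D_sets by (subst AE_distr_iff[OF UX_M]) simp_all
  have "finite_measure M"
    unfolding M_def using prob_space.prob_space_distr[OF prob_space_cond_S[OF s] UX_M]
    by (simp add: prob_space_def)
  moreover have "sets M = sets borel" "D \<in> sets M"
    using D_sets by (simp_all add: M_def)
  moreover have "sets (MX :: ('n \<Rightarrow> real) measure) = sets borel"
    unfolding MX_def by (rule sets_PiM_equal_borel)
  ultimately have "AE x in mu P V s. x \<in> f s ` D"
    unfolding mu_eq_distr_F[OF F s] M_def[symmetric] f_def
    using AE_distr_in_image[OF _ _ F_restrict_measurable[OF F] _ _ AE_D] by simp
  then show "AE x in mu P V s. h x s = h (T_star Usp Exo F s s' x) s'"
    by (rule eventually_mono) (auto simp: D_def f_def T_star_F[OF I s])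
qed

end

theorem proposition5:
  fixes P :: "'w measure"
    and Usp :: "'j::finite \<Rightarrow> real set"
    and U :: "'w \<Rightarrow> 'j \<Rightarrow> real"
    and Endo :: "'n::finite option \<Rightarrow> 'n option set"
    and Exo :: "'n option \<Rightarrow> 'j set"
    and G :: "'n option \<Rightarrow> ('n option \<Rightarrow> real) \<Rightarrow> ('j \<Rightarrow> real) \<Rightarrow> real"
    and V :: "'w \<Rightarrow> 'n option \<Rightarrow> real"
    and Vdo :: "real \<Rightarrow> 'w \<Rightarrow> 'n option \<Rightarrow> real"
    and Ss :: "real set"
    and h :: "('n \<Rightarrow> real) \<Rightarrow> real \<Rightarrow> real"
  assumes scm: "is_SCM P Usp U Endo Exo G"
    and A: "assumption_A Endo Exo"
    and sol: "is_solution P U G V"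
    and sol_do: "\<forall>s\<in>Ss. is_solution P U (do_S G s) (Vdo s)"
    and Ss_fin: "finite Ss"
    and S_in: "\<forall>\<omega>\<in>space P. Sof V \<omega> \<in> Ss"
    and S_pos: "\<forall>s\<in>Ss. measure P {\<omega> \<in> space P. Sof V \<omega> = s} > 0"
    and h_meas: "(\<lambda>(x, s). h x s) \<in> borel_measurable (MX \<Otimes>\<^sub>M borel)"
  shows
    "(cf_fair P V Vdo Ss h \<longleftrightarrow>
        (\<forall>s\<in>Ss. \<forall>s'\<in>Ss. AE p in pi_star P V Vdo s s'. h (fst p) s = h (snd p) s'))
     \<and> (assumption_RE P U Endo Exo \<longrightarrow>
        (cf_fair P V Vdo Ss h \<longleftrightarrow>
          (\<forall>s\<in>Ss. \<forall>s'\<in>Ss. s < s' \<longrightarrow>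
             (AE p in pi_star P V Vdo s s'. h (fst p) s = h (snd p) s'))))
     \<and> (\<forall>F. F_rep P U Exo V Vdo Ss F \<and> assumption_I Usp Exo Ss F \<longrightarrow>
        (cf_fair P V Vdo Ss h \<longleftrightarrow>
          (\<forall>s\<in>Ss. \<forall>s'\<in>Ss. AE x in mu P V s. h x s = h (T_star Usp Exo F s s' x) s')))
     \<and> (\<forall>F. F_rep P U Exo V Vdo Ss F \<and> assumption_I Usp Exo Ss F \<and> assumption_RE P U Endo Exo \<longrightarrow>
        (cf_fair P V Vdo Ss h \<longleftrightarrow>
          (\<forall>s\<in>Ss. \<forall>s'\<in>Ss. s < s' \<longrightarrow>
             (AE x in mu P V s. h x s = h (T_star Usp Exo F s s' x) s'))))"
proof -
  interpret cf_setting P Usp U Endo Exo G V Vdo Ss h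
    using scm A sol sol_do S_pos h_meas by unfold_locales auto
  have pi_star_iff: "(\<forall>s\<in>Ss. \<forall>s'\<in>Ss. R s s' \<longrightarrow> (AE p in pi_star P V Vdo s s'. h (fst p) s = h (snd p) s'))
      \<longleftrightarrow> (\<forall>s\<in>Ss. \<forall>s'\<in>Ss. R s s' \<longrightarrow> cf_agree s s')" for R
    using AE_pi_star_iff_cf_agree by auto
  have T_star_iff: "(\<forall>s\<in>Ss. \<forall>s'\<in>Ss. R s s' \<longrightarrow> (AE x in mu P V s. h x s = h (T_star Usp Exo F s s' x) s'))
      \<longleftrightarrow> (\<forall>s\<in>Ss. \<forall>s'\<in>Ss. R s s' \<longrightarrow> cf_agree s s')"
    if "F_rep P U Exo V Vdo Ss F" "assumption_I Usp Exo Ss F" for R F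
    using AE_mu_T_star_iff_cf_agree[OF that] by auto
  show ?thesis
    using cf_fair_iff_cf_agree cf_agree_all_iff_ordered pi_star_iff[of "\<lambda>_ _. True"] pi_star_iff[of "(<)"]
      T_star_iff[of _ "\<lambda>_ _. True"] T_star_iff[of _ "(<)"]
    by simp
qed

end
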